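(* Let $\mathcal{M}$ be an $n$-abelian category and consider a commutative diagram in $\mathcal{M}$ with rows $X^0\xrightarrow{d_X^0}X^1\xrightarrow{d_X^1}X^2\xrightarrow{d_X^2}X^3\xrightarrow{d_X^3}X^4$ and $Y^0\xrightarrow{d_Y^0}Y^1\xrightarrow{d_Y^1}Y^2\xrightarrow{d_Y^2}Y^3\xrightarrow{d_Y^3}Y^4$ and vertical morphisms $f^i:X^i\to Y^i$ ($0\le i\le4$). Suppose $f^1$ and $f^3$ are isomorphisms, $f^0$ is an epimorphism, $f^4$ is a monomorphism, and one of the following holds: (i) for $i=1,2,3$, $d_X^i$ is a weak cokernel of $d_X^{i-1}$ and $d_Y^i$ is a weak cokernel of $d_Y^{i-1}$; or (ii) for $i=0,1,2$, $d_X^i$ is a weak kernel of $d_X^{i+1}$ and $d_Y^i$ is a weak kernel of $d_Y^{i+1}$. Then $f^2$ is an isomorphism.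
   Context: A weak cokernel of $f:A\to B$ is a morphism $g:B\to C$ such that $\mathcal{M}(C,W)\to\mathcal{M}(B,W)\to\mathcal{M}(A,W)$ is exact for all $W$; a weak kernel of $g:B\to C$ is a morphism $f:A\to B$ such that $\mathcal{M}(W,A)\to\mathcal{M}(W,B)\to\mathcal{M}(W,C)$ is exact for all $W$. An $n$-abelian category is an idempotent complete additive category in which every morphism has an $n$-kernel and an $n$-cokernel, and in which every monomorphism (resp. epimorphism) together with any of its $n$-cokernels (resp. $n$-kernels) forms an $n$-exact sequence (here $n$-kernel/$n$-cokernel and $n$-exact are in the sense of Jasso: $X^0\to\cdots\to X^{n+1}$ is $n$-exact if $0\to\mathcal{M}(X^{n+1},W)\to\cdots\to\mathcal{M}(X^0,W)$ and $0\to\mathcal{M}(W,X^0)\to\cdots\to\mathcal{M}(W,X^{n+1})$ are exact for all $W$). *)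

theory Defs
  imports Main
begin

text \<open>A (small-or-large) category given in arrow-only style, together with
  the data of an additive structure on the hom-sets.
  cmp g f denotes the composite g after f.\<close>

record ('o, 'm) catdata =
  Ob  :: "'o set"
  Ar  :: "'m set"
  Src :: "'m \<Rightarrow> 'o"
  Tgt :: "'m \<Rightarrow> 'o"
  cmp :: "'m \<Rightarrow> 'm \<Rightarrow> 'm"
  idt :: "'o \<Rightarrow> 'm"
  pls :: "'m \<Rightarrow> 'm \<Rightarrow> 'm"
  zer :: "'o \<Rightarrow> 'o \<Rightarrow> 'm"
  ngt :: "'m \<Rightarrow> 'm"

definition hom :: "('o, 'm) catdata \<Rightarrow> 'o \<Rightarrow> 'o \<Rightarrow> 'm set" where
  "hom C A B = {f \<in> Ar C. Src C f = A \<and> Tgt C f = B}"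

definition is_category :: "('o, 'm) catdata \<Rightarrow> bool" where
  "is_category C \<longleftrightarrow>
     (\<forall>f\<in>Ar C. Src C f \<in> Ob C \<and> Tgt C f \<in> Ob C) \<and>
     (\<forall>A\<in>Ob C. idt C A \<in> hom C A A) \<and>
     (\<forall>f\<in>Ar C. \<forall>g\<in>Ar C. Tgt C f = Src C g \<longrightarrow>
        cmp C g f \<in> hom C (Src C f) (Tgt C g)) \<and>
     (\<forall>f\<in>Ar C. cmp C f (idt C (Src C f)) = f \<and> cmp C (idt C (Tgt C f)) f = f) \<and>
     (\<forall>f\<in>Ar C. \<forall>g\<in>Ar C. \<forall>h\<in>Ar C. Tgt C f = Src C g \<longrightarrow> Tgt C g = Src C h \<longrightarrow>
        cmp C h (cmp C g f) = cmp C (cmp C h g) f)"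

definition is_preadditive :: "('o, 'm) catdata \<Rightarrow> bool" where
  "is_preadditive C \<longleftrightarrow> is_category C \<and>
     (\<forall>A\<in>Ob C. \<forall>B\<in>Ob C.
        zer C A B \<in> hom C A B \<and>
        (\<forall>f\<in>hom C A B. \<forall>g\<in>hom C A B. pls C f g \<in> hom C A B) \<and>
        (\<forall>f\<in>hom C A B. ngt C f \<in> hom C A B) \<and>
        (\<forall>f\<in>hom C A B. \<forall>g\<in>hom C A B. \<forall>h\<in>hom C A B.
           pls C (pls C f g) h = pls C f (pls C g h)) \<and>
        (\<forall>f\<in>hom C A B. \<forall>g\<in>hom C A B. pls C f g = pls C g f) \<and>
        (\<forall>f\<in>hom C A B. pls C f (zer C A B) = f) \<and>
        (\<forall>f\<in>hom C A B. pls C f (ngt C f) = zer C A B)) \<and>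
     (\<forall>A\<in>Ob C. \<forall>B\<in>Ob C. \<forall>D\<in>Ob C.
        (\<forall>f\<in>hom C A B. \<forall>f'\<in>hom C A B. \<forall>g\<in>hom C B D.
           cmp C g (pls C f f') = pls C (cmp C g f) (cmp C g f')) \<and>
        (\<forall>f\<in>hom C A B. \<forall>g\<in>hom C B D. \<forall>g'\<in>hom C B D.
           cmp C (pls C g g') f = pls C (cmp C g f) (cmp C g' f)))"

definition is_additive :: "('o, 'm) catdata \<Rightarrow> bool" where
  "is_additive C \<longleftrightarrow> is_preadditive C \<and>
     (\<exists>Z\<in>Ob C. \<forall>A\<in>Ob C. hom C Z A = {zer C Z A} \<and> hom C A Z = {zer C A Z}) \<and>
     (\<forall>A\<in>Ob C. \<forall>B\<in>Ob C. \<exists>P\<in>Ob C. \<exists>i1\<in>hom C A P. \<exists>i2\<in>hom C B P.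
        \<exists>p1\<in>hom C P A. \<exists>p2\<in>hom C P B.
          cmp C p1 i1 = idt C A \<and> cmp C p2 i2 = idt C B \<and>
          cmp C p1 i2 = zer C B A \<and> cmp C p2 i1 = zer C A B \<and>
          pls C (cmp C i1 p1) (cmp C i2 p2) = idt C P)"

definition idempotent_complete :: "('o, 'm) catdata \<Rightarrow> bool" where
  "idempotent_complete C \<longleftrightarrow>
     (\<forall>A\<in>Ob C. \<forall>e\<in>hom C A A. cmp C e e = e \<longrightarrow>
        (\<exists>B\<in>Ob C. \<exists>r\<in>hom C A B. \<exists>s\<in>hom C B A. cmp C s r = e \<and> cmp C r s = idt C B))"

definition mono :: "('o, 'm) catdata \<Rightarrow> 'm \<Rightarrow> bool" where
  "mono C f \<longleftrightarrow> f \<in> Ar C \<and>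
     (\<forall>W\<in>Ob C. \<forall>u\<in>hom C W (Src C f). \<forall>v\<in>hom C W (Src C f).
        cmp C f u = cmp C f v \<longrightarrow> u = v)"

definition epi :: "('o, 'm) catdata \<Rightarrow> 'm \<Rightarrow> bool" where
  "epi C f \<longleftrightarrow> f \<in> Ar C \<and>
     (\<forall>W\<in>Ob C. \<forall>u\<in>hom C (Tgt C f) W. \<forall>v\<in>hom C (Tgt C f) W.
        cmp C u f = cmp C v f \<longrightarrow> u = v)"

definition iso :: "('o, 'm) catdata \<Rightarrow> 'm \<Rightarrow> bool" where
  "iso C f \<longleftrightarrow> f \<in> Ar C \<and>
     (\<exists>g\<in>hom C (Tgt C f) (Src C f).
        cmp C g f = idt C (Src C f) \<and> cmp C f g = idt C (Tgt C f))"

text \<open>Exactness of 0 \<rightarrow> M(W,X^0) \<rightarrow> ... \<rightarrow> M(W,X^k) (maps d i : X i \<rightarrow> X (i+1), i<k).\<close>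

definition cov_exact :: "('o, 'm) catdata \<Rightarrow> 'o \<Rightarrow> (nat \<Rightarrow> 'o) \<Rightarrow> (nat \<Rightarrow> 'm) \<Rightarrow> nat \<Rightarrow> bool" where
  "cov_exact C W X d k \<longleftrightarrow>
     (\<forall>u\<in>hom C W (X 0). cmp C (d 0) u = zer C W (X 1) \<longrightarrow> u = zer C W (X 0)) \<and>
     (\<forall>i. 1 \<le> i \<and> i < k \<longrightarrow>
        (\<forall>u\<in>hom C W (X i). cmp C (d i) u = zer C W (X (Suc i)) \<longleftrightarrow>
           (\<exists>v\<in>hom C W (X (i - 1)). u = cmp C (d (i - 1)) v)))"

text \<open>Exactness of 0 \<rightarrow> M(X^k,W) \<rightarrow> ... \<rightarrow> M(X^0,W).\<close>

definition contra_exact :: "('o, 'm) catdata \<Rightarrow> 'o \<Rightarrow> (nat \<Rightarrow> 'o) \<Rightarrow> (nat \<Rightarrow> 'm) \<Rightarrow> nat \<Rightarrow> bool" where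
  "contra_exact C W X d k \<longleftrightarrow>
     (\<forall>u\<in>hom C (X k) W. cmp C u (d (k - 1)) = zer C (X (k - 1)) W \<longrightarrow> u = zer C (X k) W) \<and>
     (\<forall>i. 1 \<le> i \<and> i < k \<longrightarrow>
        (\<forall>u\<in>hom C (X i) W. cmp C u (d (i - 1)) = zer C (X (i - 1)) W \<longleftrightarrow>
           (\<exists>v\<in>hom C (X (Suc i)) W. u = cmp C v (d i))))"

definition nseq :: "('o, 'm) catdata \<Rightarrow> nat \<Rightarrow> (nat \<Rightarrow> 'o) \<Rightarrow> (nat \<Rightarrow> 'm) \<Rightarrow> bool" where
  "nseq C n X d \<longleftrightarrow> (\<forall>i\<le>Suc n. X i \<in> Ob C) \<and> (\<forall>i\<le>n. d i \<in> hom C (X i) (X (Suc i)))"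

text \<open>(d 0, ..., d (n-1)) is an n-kernel of d n (Jasso).\<close>

definition n_kernel :: "('o, 'm) catdata \<Rightarrow> nat \<Rightarrow> (nat \<Rightarrow> 'o) \<Rightarrow> (nat \<Rightarrow> 'm) \<Rightarrow> bool" where
  "n_kernel C n X d \<longleftrightarrow> nseq C n X d \<and> (\<forall>W\<in>Ob C. cov_exact C W X d (Suc n))"

text \<open>(d 1, ..., d n) is an n-cokernel of d 0 (Jasso).\<close>

definition n_cokernel :: "('o, 'm) catdata \<Rightarrow> nat \<Rightarrow> (nat \<Rightarrow> 'o) \<Rightarrow> (nat \<Rightarrow> 'm) \<Rightarrow> bool" where
  "n_cokernel C n X d \<longleftrightarrow> nseq C n X d \<and> (\<forall>W\<in>Ob C. contra_exact C W X d (Suc n))"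

definition n_exact :: "('o, 'm) catdata \<Rightarrow> nat \<Rightarrow> (nat \<Rightarrow> 'o) \<Rightarrow> (nat \<Rightarrow> 'm) \<Rightarrow> bool" where
  "n_exact C n X d \<longleftrightarrow> nseq C n X d \<and>
     (\<forall>W\<in>Ob C. cov_exact C W X d (Suc n) \<and> contra_exact C W X d (Suc n))"

definition n_abelian :: "('o, 'm) catdata \<Rightarrow> nat \<Rightarrow> bool" where
  "n_abelian C n \<longleftrightarrow> 0 < n \<and> is_additive C \<and> idempotent_complete C \<and>
     (\<forall>f\<in>Ar C. \<exists>X d. X n = Src C f \<and> X (Suc n) = Tgt C f \<and> d n = f \<and> n_kernel C n X d) \<and>
     (\<forall>f\<in>Ar C. \<exists>X d. X 0 = Src C f \<and> X 1 = Tgt C f \<and> d 0 = f \<and> n_cokernel C n X d) \<and>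
     (\<forall>X d. mono C (d 0) \<and> n_cokernel C n X d \<longrightarrow> n_exact C n X d) \<and>
     (\<forall>X d. epi C (d n) \<and> n_kernel C n X d \<longrightarrow> n_exact C n X d)"

definition weak_cokernel :: "('o, 'm) catdata \<Rightarrow> 'm \<Rightarrow> 'm \<Rightarrow> bool" where
  "weak_cokernel C f g \<longleftrightarrow> f \<in> Ar C \<and> g \<in> Ar C \<and> Tgt C f = Src C g \<and>
     (\<forall>W\<in>Ob C. \<forall>h\<in>hom C (Src C g) W.
        cmp C h f = zer C (Src C f) W \<longleftrightarrow> (\<exists>k\<in>hom C (Tgt C g) W. h = cmp C k g))"

text \<open>f is a weak kernel of g.\<close>

definition weak_kernel :: "('o, 'm) catdata \<Rightarrow> 'm \<Rightarrow> 'm \<Rightarrow> bool" where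
  "weak_kernel C g f \<longleftrightarrow> f \<in> Ar C \<and> g \<in> Ar C \<and> Tgt C f = Src C g \<and>
     (\<forall>W\<in>Ob C. \<forall>h\<in>hom C W (Src C g).
        cmp C g h = zer C W (Tgt C g) \<longleftrightarrow> (\<exists>k\<in>hom C W (Src C f). h = cmp C f k))"

end

theory Submission
  imports Defs
begin

text \<open>
  Only the preadditive structure of the n-abelian category is used, and case (ii) is case (i)
  in the opposite category. In case (i), f2 is an epimorphism: if u f2 = 0 then u dY1 = 0
  because f1 is epi, so u = k dY2; then k f3 factors through dX3, hence u factors through
  dX3 f3\<inverse> dY2, which f4 sends to dY3 dY2 = 0. And f2 has a left inverse: dX1 f1\<inverse> dY0 = 0
  because f0 is epi, so dX1 f1\<inverse> = y dY1; the defect 1 - y f2 vanishes on dX1, hence equals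
  z dX2, and then z f3\<inverse> dY2 + y is a left inverse of f2. An epimorphism with a left inverse
  is an isomorphism.
\<close>

locale preadditive =
  fixes C :: "('o, 'm) catdata"
  assumes preadditive: "is_preadditive C"
begin

lemma category: "is_category C"
  using preadditive unfolding is_preadditive_def by blast

lemma hom_Src_Ob: "f \<in> hom C A B \<Longrightarrow> A \<in> Ob C"
  using category unfolding is_category_def hom_def by blast

lemma hom_Tgt_Ob: "f \<in> hom C A B \<Longrightarrow> B \<in> Ob C"
  using category unfolding is_category_def hom_def by blast

lemma cmp_hom: "f \<in> hom C A B \<Longrightarrow> g \<in> hom C B D \<Longrightarrow> cmp C g f \<in> hom C A D"
  using category unfolding is_category_def hom_def by auto

lemma cmp_assoc:
  "f \<in> hom C A B \<Longrightarrow> g \<in> hom C B D \<Longrightarrow> h \<in> hom C D E \<Longrightarrow>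
   cmp C (cmp C h g) f = cmp C h (cmp C g f)"
  using category unfolding is_category_def hom_def by auto

lemma idt_hom: "A \<in> Ob C \<Longrightarrow> idt C A \<in> hom C A A"
  using category unfolding is_category_def by blast

lemma cmp_idt_left: "f \<in> hom C A B \<Longrightarrow> cmp C (idt C B) f = f"
  using category unfolding is_category_def hom_def by auto

lemma cmp_idt_right: "f \<in> hom C A B \<Longrightarrow> cmp C f (idt C A) = f"
  using category unfolding is_category_def hom_def by auto

lemma zer_hom: "A \<in> Ob C \<Longrightarrow> B \<in> Ob C \<Longrightarrow> zer C A B \<in> hom C A B"
  using preadditive unfolding is_preadditive_def by blast

lemma pls_hom: "f \<in> hom C A B \<Longrightarrow> g \<in> hom C A B \<Longrightarrow> pls C f g \<in> hom C A B"
  using preadditive hom_Src_Ob hom_Tgt_Ob unfolding is_preadditive_def by blast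

lemma ngt_hom: "f \<in> hom C A B \<Longrightarrow> ngt C f \<in> hom C A B"
  using preadditive hom_Src_Ob hom_Tgt_Ob unfolding is_preadditive_def by blast

lemma pls_assoc:
  "f \<in> hom C A B \<Longrightarrow> g \<in> hom C A B \<Longrightarrow> h \<in> hom C A B \<Longrightarrow>
   pls C (pls C f g) h = pls C f (pls C g h)"
  using preadditive hom_Src_Ob hom_Tgt_Ob unfolding is_preadditive_def by blast

lemma pls_commute: "f \<in> hom C A B \<Longrightarrow> g \<in> hom C A B \<Longrightarrow> pls C f g = pls C g f"
  using preadditive hom_Src_Ob hom_Tgt_Ob unfolding is_preadditive_def by blast

lemma pls_zer: "f \<in> hom C A B \<Longrightarrow> pls C f (zer C A B) = f"
  using preadditive hom_Src_Ob hom_Tgt_Ob unfolding is_preadditive_def by blast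

lemma pls_ngt: "f \<in> hom C A B \<Longrightarrow> pls C f (ngt C f) = zer C A B"
  using preadditive hom_Src_Ob hom_Tgt_Ob unfolding is_preadditive_def by blast

lemma cmp_pls_distrib_left:
  "f \<in> hom C A B \<Longrightarrow> f' \<in> hom C A B \<Longrightarrow> g \<in> hom C B D \<Longrightarrow>
   cmp C g (pls C f f') = pls C (cmp C g f) (cmp C g f')"
  using preadditive hom_Src_Ob hom_Tgt_Ob unfolding is_preadditive_def by metis

lemma cmp_pls_distrib_right:
  "f \<in> hom C A B \<Longrightarrow> g \<in> hom C B D \<Longrightarrow> g' \<in> hom C B D \<Longrightarrow>
   cmp C (pls C g g') f = pls C (cmp C g f) (cmp C g' f)"
  using preadditive hom_Src_Ob hom_Tgt_Ob unfolding is_preadditive_def by metis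

lemma zer_pls: "f \<in> hom C A B \<Longrightarrow> pls C (zer C A B) f = f"
  using pls_commute pls_zer zer_hom hom_Src_Ob hom_Tgt_Ob by metis

lemma eq_if_pls_ngt_eq_zer:
  assumes f: "f \<in> hom C A B" and g: "g \<in> hom C A B" and fg: "pls C f (ngt C g) = zer C A B"
  shows "f = g"
proof -
  have "f = pls C f (pls C (ngt C g) g)"
    using pls_commute[OF ngt_hom[OF g] g] pls_ngt[OF g] pls_zer[OF f] by simp
  also have "\<dots> = g"
    using pls_assoc[OF f ngt_hom[OF g] g] fg zer_pls[OF g] by simp
  finally show ?thesis .
qed

lemma pls_idem_eq_zer:
  assumes f: "f \<in> hom C A B" and ff: "pls C f f = f"
  shows "f = zer C A B"
proof -
  have "zer C A B = pls C (pls C f f) (ngt C f)" using ff pls_ngt[OF f] by simp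
  also have "\<dots> = f" using pls_assoc[OF f f ngt_hom[OF f]] pls_ngt[OF f] pls_zer[OF f] by simp
  finally show ?thesis by simp
qed

lemma pls_ngt_pls_cancel:
  assumes f: "f \<in> hom C A B" and g: "g \<in> hom C A B"
  shows "pls C (pls C f (ngt C g)) g = f"
  using pls_assoc[OF f ngt_hom[OF g] g] pls_commute[OF ngt_hom[OF g] g] pls_ngt[OF g] pls_zer[OF f]
  by simp

lemma ngt_unique:
  assumes f: "f \<in> hom C A B" and g: "g \<in> hom C A B" and fg: "pls C f g = zer C A B"
  shows "g = ngt C f"
proof -
  have "g = pls C g (pls C f (ngt C f))" using pls_ngt[OF f] pls_zer[OF g] by simp
  also have "\<dots> = pls C (pls C f g) (ngt C f)"
    using pls_assoc[OF g f ngt_hom[OF f]] pls_commute[OF g f] by simp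
  also have "\<dots> = ngt C f" using fg zer_pls[OF ngt_hom[OF f]] by simp
  finally show ?thesis .
qed

lemma cmp_zer_left:
  assumes f: "f \<in> hom C A B" and D: "D \<in> Ob C"
  shows "cmp C (zer C B D) f = zer C A D"
proof (rule pls_idem_eq_zer)
  have z: "zer C B D \<in> hom C B D" using zer_hom[OF hom_Tgt_Ob[OF f] D] .
  show "cmp C (zer C B D) f \<in> hom C A D" using cmp_hom[OF f z] .
  show "pls C (cmp C (zer C B D) f) (cmp C (zer C B D) f) = cmp C (zer C B D) f"
    using cmp_pls_distrib_right[OF f z z] pls_zer[OF z] by simp
qed

lemma cmp_zer_right:
  assumes g: "g \<in> hom C B D" and A: "A \<in> Ob C"
  shows "cmp C g (zer C A B) = zer C A D"
proof (rule pls_idem_eq_zer)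
  have z: "zer C A B \<in> hom C A B" using zer_hom[OF A hom_Src_Ob[OF g]] .
  show "cmp C g (zer C A B) \<in> hom C A D" using cmp_hom[OF z g] .
  show "pls C (cmp C g (zer C A B)) (cmp C g (zer C A B)) = cmp C g (zer C A B)"
    using cmp_pls_distrib_left[OF z z g] pls_zer[OF z] by simp
qed

lemma cmp_ngt_left:
  assumes f: "f \<in> hom C A B" and g: "g \<in> hom C B D"
  shows "cmp C (ngt C g) f = ngt C (cmp C g f)"
proof (rule ngt_unique)
  show "cmp C g f \<in> hom C A D" "cmp C (ngt C g) f \<in> hom C A D"
    using cmp_hom[OF f g] cmp_hom[OF f ngt_hom[OF g]] .
  show "pls C (cmp C g f) (cmp C (ngt C g) f) = zer C A D"
    using cmp_pls_distrib_right[OF f g ngt_hom[OF g]] pls_ngt[OF g]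
      cmp_zer_left[OF f hom_Tgt_Ob[OF g]] by simp
qed

lemma epi_cancel:
  assumes "epi C f" "f \<in> hom C A B" "u \<in> hom C B W" "v \<in> hom C B W" "cmp C u f = cmp C v f"
  shows "u = v"
  using assms hom_Tgt_Ob[OF assms(3)] unfolding epi_def hom_def by blast

lemma mono_cancel:
  assumes "mono C f" "f \<in> hom C A B" "u \<in> hom C W A" "v \<in> hom C W A" "cmp C f u = cmp C f v"
  shows "u = v"
  using assms hom_Src_Ob[OF assms(3)] unfolding mono_def hom_def by blast

lemma epi_cancel_zer:
  assumes "epi C f" "f \<in> hom C A B" "u \<in> hom C B W" "cmp C u f = zer C A W"
  shows "u = zer C B W"
  using assms epi_cancel cmp_zer_left zer_hom hom_Tgt_Ob hom_Src_Ob by metis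

lemma mono_cancel_zer:
  assumes "mono C f" "f \<in> hom C A B" "u \<in> hom C W A" "cmp C f u = zer C W B"
  shows "u = zer C W A"
  using assms mono_cancel cmp_zer_right zer_hom hom_Tgt_Ob hom_Src_Ob by metis

lemma epiI_zer:
  assumes f: "f \<in> hom C A B"
    and cancel: "\<And>W u. W \<in> Ob C \<Longrightarrow> u \<in> hom C B W \<Longrightarrow> cmp C u f = zer C A W \<Longrightarrow> u = zer C B W"
  shows "epi C f"
  unfolding epi_def
proof (intro conjI ballI impI)
  show "f \<in> Ar C" using f by (simp add: hom_def)
  fix W u v assume W: "W \<in> Ob C" and "u \<in> hom C (Tgt C f) W" "v \<in> hom C (Tgt C f) W"
    and uv: "cmp C u f = cmp C v f"
  then have u: "u \<in> hom C B W" and v: "v \<in> hom C B W" using f by (simp_all add: hom_def)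
  have "cmp C (pls C u (ngt C v)) f = pls C (cmp C v f) (ngt C (cmp C v f))"
    using cmp_pls_distrib_right[OF f u ngt_hom[OF v]] cmp_ngt_left[OF f v] uv by simp
  also have "\<dots> = zer C A W" using pls_ngt[OF cmp_hom[OF f v]] .
  finally show "u = v"
    using cancel[OF W pls_hom[OF u ngt_hom[OF v]]] eq_if_pls_ngt_eq_zer[OF u v] by blast
qed

lemma isoE:
  assumes "iso C f" "f \<in> hom C A B"
  obtains g where "g \<in> hom C B A" "cmp C g f = idt C A" "cmp C f g = idt C B"
  using assms unfolding iso_def hom_def by auto

lemma iso_imp_epi:
  assumes "iso C f" shows "epi C f"
proof -
  obtain g where f: "f \<in> hom C (Src C f) (Tgt C f)" and g: "g \<in> hom C (Tgt C f) (Src C f)"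
    and gf: "cmp C g f = idt C (Src C f)" and fg: "cmp C f g = idt C (Tgt C f)"
    using assms unfolding iso_def hom_def by auto
  show ?thesis
    unfolding epi_def
  proof (intro conjI ballI impI)
    show "f \<in> Ar C" using f by (simp add: hom_def)
    fix W u v assume u: "u \<in> hom C (Tgt C f) W" and v: "v \<in> hom C (Tgt C f) W"
      and uv: "cmp C u f = cmp C v f"
    have "u = cmp C (cmp C u f) g" using cmp_assoc[OF g f u] fg cmp_idt_right[OF u] by simp
    also have "\<dots> = v" using uv cmp_assoc[OF g f v] fg cmp_idt_right[OF v] by simp
    finally show "u = v" .
  qed
qed

lemma iso_if_epi_left_inverse:
  assumes f: "f \<in> hom C A B" and h: "h \<in> hom C B A" and hf: "cmp C h f = idt C A"
    and epi: "epi C f"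
  shows "iso C f"
proof -
  have "cmp C (cmp C f h) f = cmp C (idt C B) f"
    using cmp_assoc[OF f h f] hf cmp_idt_right[OF f] cmp_idt_left[OF f] by simp
  then have "cmp C f h = idt C B"
    using epi_cancel[OF epi f cmp_hom[OF h f] idt_hom[OF hom_Tgt_Ob[OF f]]] by blast
  then show ?thesis using f h hf unfolding iso_def hom_def by auto
qed

lemma weak_cokernelD:
  assumes "weak_cokernel C f g" "f \<in> hom C A B" "g \<in> hom C B D" "h \<in> hom C B W"
    "cmp C h f = zer C A W"
  shows "\<exists>k\<in>hom C D W. h = cmp C k g"
  using assms hom_Tgt_Ob[OF assms(4)] unfolding weak_cokernel_def hom_def by auto

lemma weak_cokernel_cmp_zer:
  assumes "weak_cokernel C f g" "f \<in> hom C A B" "g \<in> hom C B D"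
  shows "cmp C g f = zer C A D"
proof -
  have "idt C D \<in> hom C D D" using idt_hom[OF hom_Tgt_Ob[OF assms(3)]] .
  then show ?thesis
    using assms hom_Tgt_Ob[OF assms(3)] cmp_idt_left[OF assms(3)]
    unfolding weak_cokernel_def hom_def by auto
qed

end

definition comm_ladder ::
  "('o, 'm) catdata \<Rightarrow> (nat \<Rightarrow> 'o) \<Rightarrow> (nat \<Rightarrow> 'o) \<Rightarrow> (nat \<Rightarrow> 'm) \<Rightarrow> (nat \<Rightarrow> 'm) \<Rightarrow> (nat \<Rightarrow> 'm) \<Rightarrow> nat \<Rightarrow> bool"
where
  "comm_ladder C X Y dX dY f k \<longleftrightarrow>
     (\<forall>i\<le>k. f i \<in> hom C (X i) (Y i)) \<and>
     (\<forall>i<k. dX i \<in> hom C (X i) (X (Suc i)) \<and> dY i \<in> hom C (Y i) (Y (Suc i)) \<and>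
            cmp C (f (Suc i)) (dX i) = cmp C (dY i) (f i))"

lemma comm_ladder_vertical: "comm_ladder C X Y dX dY f k \<Longrightarrow> i \<le> k \<Longrightarrow> f i \<in> hom C (X i) (Y i)"
  by (simp add: comm_ladder_def)

lemma comm_ladder_top: "comm_ladder C X Y dX dY f k \<Longrightarrow> i < k \<Longrightarrow> dX i \<in> hom C (X i) (X (Suc i))"
  by (simp add: comm_ladder_def)

lemma comm_ladder_bottom: "comm_ladder C X Y dX dY f k \<Longrightarrow> i < k \<Longrightarrow> dY i \<in> hom C (Y i) (Y (Suc i))"
  by (simp add: comm_ladder_def)

lemma comm_ladder_commutes:
  "comm_ladder C X Y dX dY f k \<Longrightarrow> i < k \<Longrightarrow> cmp C (f (Suc i)) (dX i) = cmp C (dY i) (f i)"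
  by (simp add: comm_ladder_def)

lemma comm_ladder_le: "comm_ladder C X Y dX dY f l \<Longrightarrow> k \<le> l \<Longrightarrow> comm_ladder C X Y dX dY f k"
  by (simp add: comm_ladder_def)

lemma comm_ladder_shift:
  "comm_ladder C X Y dX dY f (Suc k) \<Longrightarrow>
   comm_ladder C (\<lambda>i. X (Suc i)) (\<lambda>i. Y (Suc i)) (\<lambda>i. dX (Suc i)) (\<lambda>i. dY (Suc i)) (\<lambda>i. f (Suc i)) k"
  by (simp add: comm_ladder_def)

locale commutative_ladder = preadditive +
  fixes X Y :: "nat \<Rightarrow> 'o" and dX dY f :: "nat \<Rightarrow> 'm"
  assumes ladder: "comm_ladder C X Y dX dY f 3"
begin

lemma ladder_components:
  shows f0: "f 0 \<in> hom C (X 0) (Y 0)" and f1: "f 1 \<in> hom C (X 1) (Y 1)"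
    and f2: "f 2 \<in> hom C (X 2) (Y 2)" and f3: "f 3 \<in> hom C (X 3) (Y 3)"
    and dX0: "dX 0 \<in> hom C (X 0) (X 1)" and dX1: "dX 1 \<in> hom C (X 1) (X 2)"
    and dX2: "dX 2 \<in> hom C (X 2) (X 3)"
    and dY0: "dY 0 \<in> hom C (Y 0) (Y 1)" and dY1: "dY 1 \<in> hom C (Y 1) (Y 2)"
    and dY2: "dY 2 \<in> hom C (Y 2) (Y 3)"
    and sq0: "cmp C (f 1) (dX 0) = cmp C (dY 0) (f 0)"
    and sq1: "cmp C (f 2) (dX 1) = cmp C (dY 1) (f 1)"
    and sq2: "cmp C (f 3) (dX 2) = cmp C (dY 2) (f 2)"
  using ladder unfolding comm_ladder_def by (auto simp: eval_nat_numeral)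

lemma weak_cokernel_four_lemma_epi:
  assumes epi0: "epi C (f 0)" and iso2: "iso C (f 2)" and mono3: "mono C (f 3)"
    and wY1: "weak_cokernel C (dY 0) (dY 1)" and wX2: "weak_cokernel C (dX 1) (dX 2)"
    and wY2: "weak_cokernel C (dY 1) (dY 2)"
  shows "epi C (f 1)"
proof -
  obtain g2 where g2: "g2 \<in> hom C (Y 2) (X 2)" and f2g2: "cmp C (f 2) g2 = idt C (Y 2)"
    using iso2 f2 by (auto elim: isoE)
  show ?thesis
  proof (rule epiI_zer[OF f1])
    fix W u assume W: "W \<in> Ob C" and u: "u \<in> hom C (Y 1) W" and uf1: "cmp C u (f 1) = zer C (X 1) W"
    have "cmp C (cmp C u (dY 0)) (f 0) = cmp C (cmp C u (f 1)) (dX 0)"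
      using cmp_assoc[OF f0 dY0 u] cmp_assoc[OF dX0 f1 u] sq0 by simp
    also have "\<dots> = zer C (X 0) W" using uf1 cmp_zer_left[OF dX0 W] by simp
    finally have "cmp C u (dY 0) = zer C (Y 0) W"
      using epi_cancel_zer[OF epi0 f0 cmp_hom[OF dY0 u]] by blast
    then obtain k where k: "k \<in> hom C (Y 2) W" and u_k: "u = cmp C k (dY 1)"
      using weak_cokernelD[OF wY1 dY0 dY1 u] by blast
    have "cmp C (cmp C k (f 2)) (dX 1) = zer C (X 1) W"
      using cmp_assoc[OF dX1 f2 k] cmp_assoc[OF f1 dY1 k] sq1 u_k uf1 by simp
    then obtain m where m: "m \<in> hom C (X 3) W" and kf2: "cmp C k (f 2) = cmp C m (dX 2)"
      using weak_cokernelD[OF wX2 dX1 dX2 cmp_hom[OF f2 k]] by blast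
    define t where "t = cmp C (dX 2) (cmp C g2 (dY 1))"
    have t: "t \<in> hom C (Y 1) (X 3)" unfolding t_def using cmp_hom[OF cmp_hom[OF dY1 g2] dX2] .
    have "cmp C (f 3) t = cmp C (cmp C (dY 2) (f 2)) (cmp C g2 (dY 1))"
      unfolding t_def using cmp_assoc[OF cmp_hom[OF dY1 g2] dX2 f3] sq2 by simp
    also have "\<dots> = cmp C (dY 2) (cmp C (cmp C (f 2) g2) (dY 1))"
      using cmp_assoc[OF cmp_hom[OF dY1 g2] f2 dY2] cmp_assoc[OF dY1 g2 f2] by simp
    also have "\<dots> = cmp C (dY 2) (dY 1)" using f2g2 cmp_idt_left[OF dY1] by simp
    also have "\<dots> = zer C (Y 1) (Y 3)" using weak_cokernel_cmp_zer[OF wY2 dY1 dY2] .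
    finally have t0: "t = zer C (Y 1) (X 3)" using mono_cancel_zer[OF mono3 f3 t] by blast
    have "u = cmp C k (cmp C (cmp C (f 2) g2) (dY 1))" using u_k f2g2 cmp_idt_left[OF dY1] by simp
    also have "\<dots> = cmp C (cmp C k (f 2)) (cmp C g2 (dY 1))"
      using cmp_assoc[OF dY1 g2 f2] cmp_assoc[OF cmp_hom[OF dY1 g2] f2 k] by simp
    also have "\<dots> = cmp C m t"
      unfolding t_def using kf2 cmp_assoc[OF cmp_hom[OF dY1 g2] dX2 m] by simp
    finally have "u = cmp C m t" .
    then show "u = zer C (Y 1) W" using t0 cmp_zer_right[OF m hom_Src_Ob[OF dY1]] by simp
  qed
qed


lemma weak_cokernel_four_lemma_left_inverse:
  assumes epi0: "epi C (f 0)" and iso1: "iso C (f 1)" and iso3: "iso C (f 3)"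
    and wX1: "weak_cokernel C (dX 0) (dX 1)" and wY1: "weak_cokernel C (dY 0) (dY 1)"
    and wX2: "weak_cokernel C (dX 1) (dX 2)"
  shows "\<exists>h\<in>hom C (Y 2) (X 2). cmp C h (f 2) = idt C (X 2)"
proof -
  obtain g1 where g1: "g1 \<in> hom C (Y 1) (X 1)" and g1f1: "cmp C g1 (f 1) = idt C (X 1)"
    using iso1 f1 by (auto elim: isoE)
  obtain g3 where g3: "g3 \<in> hom C (Y 3) (X 3)" and g3f3: "cmp C g3 (f 3) = idt C (X 3)"
    using iso3 f3 by (auto elim: isoE)
  define y1 where "y1 = cmp C (dX 1) g1"
  have y1: "y1 \<in> hom C (Y 1) (X 2)" unfolding y1_def using cmp_hom[OF g1 dX1] .
  have y1f1: "cmp C y1 (f 1) = dX 1"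
    unfolding y1_def using cmp_assoc[OF f1 g1 dX1] g1f1 cmp_idt_right[OF dX1] by simp
  have "cmp C (cmp C y1 (dY 0)) (f 0) = cmp C (cmp C y1 (f 1)) (dX 0)"
    using cmp_assoc[OF f0 dY0 y1] cmp_assoc[OF dX0 f1 y1] sq0 by simp
  also have "\<dots> = zer C (X 0) (X 2)" using y1f1 weak_cokernel_cmp_zer[OF wX1 dX0 dX1] by simp
  finally have "cmp C y1 (dY 0) = zer C (Y 0) (X 2)"
    using epi_cancel_zer[OF epi0 f0 cmp_hom[OF dY0 y1]] by blast
  then obtain y2 where y2: "y2 \<in> hom C (Y 2) (X 2)" and y1_y2: "y1 = cmp C y2 (dY 1)"
    using weak_cokernelD[OF wY1 dY0 dY1 y1] by blast
  define q where "q = cmp C y2 (f 2)"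
  have q: "q \<in> hom C (X 2) (X 2)" unfolding q_def using cmp_hom[OF f2 y2] .
  have "cmp C q (dX 1) = cmp C y1 (f 1)"
    unfolding q_def y1_y2 using cmp_assoc[OF dX1 f2 y2] cmp_assoc[OF f1 dY1 y2] sq1 by simp
  then have qdX1: "cmp C q (dX 1) = dX 1" using y1f1 by simp
  have idt: "idt C (X 2) \<in> hom C (X 2) (X 2)" using idt_hom[OF hom_Tgt_Ob[OF dX1]] .
  define e where "e = pls C (idt C (X 2)) (ngt C q)"
  have e: "e \<in> hom C (X 2) (X 2)" unfolding e_def using pls_hom[OF idt ngt_hom[OF q]] .
  have "cmp C e (dX 1) = pls C (dX 1) (ngt C (dX 1))"
    unfolding e_def using cmp_pls_distrib_right[OF dX1 idt ngt_hom[OF q]] cmp_idt_left[OF dX1]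
      cmp_ngt_left[OF dX1 q] qdX1 by simp
  also have "\<dots> = zer C (X 1) (X 2)" using pls_ngt[OF dX1] .
  finally obtain z where z: "z \<in> hom C (X 3) (X 2)" and e_z: "e = cmp C z (dX 2)"
    using weak_cokernelD[OF wX2 dX1 dX2 e] by blast
  have zg3: "cmp C z g3 \<in> hom C (Y 3) (X 2)" using cmp_hom[OF g3 z] .
  have zg3dY2: "cmp C (cmp C z g3) (dY 2) \<in> hom C (Y 2) (X 2)" using cmp_hom[OF dY2 zg3] .
  have "cmp C (cmp C (cmp C z g3) (dY 2)) (f 2) = cmp C (cmp C (cmp C z g3) (f 3)) (dX 2)"
    using cmp_assoc[OF f2 dY2 zg3] cmp_assoc[OF dX2 f3 zg3] sq2 by simp
  also have "\<dots> = e" using cmp_assoc[OF f3 g3 z] g3f3 cmp_idt_right[OF z] e_z by simp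
  finally have "cmp C (pls C (cmp C (cmp C z g3) (dY 2)) y2) (f 2) = pls C e q"
    unfolding q_def using cmp_pls_distrib_right[OF f2 zg3dY2 y2] by simp
  also have "\<dots> = idt C (X 2)" unfolding e_def using pls_ngt_pls_cancel[OF idt q] .
  finally show ?thesis using pls_hom[OF zg3dY2 y2] by blast
qed

end

lemma (in preadditive) weak_cokernel_five_lemma:
  assumes L: "comm_ladder C X Y dX dY f 4"
    and epi0: "epi C (f 0)" and iso1: "iso C (f 1)" and iso3: "iso C (f 3)" and mono4: "mono C (f 4)"
    and wcok: "\<forall>i\<in>{1,2,3}. weak_cokernel C (dX (i - 1)) (dX i) \<and> weak_cokernel C (dY (i - 1)) (dY i)"
  shows "iso C (f 2)"
proof -
  have wX: "weak_cokernel C (dX 0) (dX 1)" "weak_cokernel C (dX 1) (dX 2)" "weak_cokernel C (dX 2) (dX 3)"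
    and wY: "weak_cokernel C (dY 0) (dY 1)" "weak_cokernel C (dY 1) (dY 2)" "weak_cokernel C (dY 2) (dY 3)"
    using wcok by auto
  interpret left: commutative_ladder C X Y dX dY f
    using comm_ladder_le[OF L] by unfold_locales simp
  interpret right: commutative_ladder C "\<lambda>i. X (Suc i)" "\<lambda>i. Y (Suc i)" "\<lambda>i. dX (Suc i)"
      "\<lambda>i. dY (Suc i)" "\<lambda>i. f (Suc i)"
    using comm_ladder_shift[of C X Y dX dY f 3] L by unfold_locales (simp add: eval_nat_numeral)
  have "epi C (f 2)"
    using right.weak_cokernel_four_lemma_epi iso_imp_epi[OF iso1] iso3 mono4 wX wY
    by (simp add: eval_nat_numeral)
  moreover obtain h where "h \<in> hom C (Y 2) (X 2)" "cmp C h (f 2) = idt C (X 2)"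
    using left.weak_cokernel_four_lemma_left_inverse[OF epi0 iso1 iso3 wX(1) wY(1) wX(2)] by blast
  ultimately show ?thesis using iso_if_epi_left_inverse left.f2 by blast
qed

definition op_cat :: "('o, 'm) catdata \<Rightarrow> ('o, 'm) catdata" where
  "op_cat C = C\<lparr>Src := Tgt C, Tgt := Src C, cmp := \<lambda>g f. cmp C f g, zer := \<lambda>A B. zer C B A\<rparr>"

lemma op_cat_simps [simp]:
  "Ob (op_cat C) = Ob C" "Ar (op_cat C) = Ar C" "Src (op_cat C) = Tgt C" "Tgt (op_cat C) = Src C"
  "cmp (op_cat C) g f = cmp C f g" "idt (op_cat C) = idt C" "pls (op_cat C) = pls C"
  "zer (op_cat C) A B = zer C B A" "ngt (op_cat C) = ngt C"
  by (simp_all add: op_cat_def)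

lemma hom_op_cat [simp]: "hom (op_cat C) A B = hom C B A"
  by (auto simp: hom_def)

lemma epi_op_cat [simp]: "epi (op_cat C) f \<longleftrightarrow> mono C f"
  by (simp add: epi_def mono_def)

lemma mono_op_cat [simp]: "mono (op_cat C) f \<longleftrightarrow> epi C f"
  by (simp add: epi_def mono_def)

lemma iso_op_cat [simp]: "iso (op_cat C) f \<longleftrightarrow> iso C f"
  by (auto simp: iso_def)

lemma weak_cokernel_op_cat [simp]: "weak_cokernel (op_cat C) g f \<longleftrightarrow> weak_kernel C g f"
  by (auto simp: weak_cokernel_def weak_kernel_def)

lemma is_category_op_cat: "is_category C \<Longrightarrow> is_category (op_cat C)"
  unfolding is_category_def op_cat_simps hom_op_cat
proof (elim conjE, intro conjI)
  assume ob: "\<forall>f\<in>Ar C. Src C f \<in> Ob C \<and> Tgt C f \<in> Ob C"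
    and idt: "\<forall>A\<in>Ob C. idt C A \<in> hom C A A"
    and cmp: "\<forall>f\<in>Ar C. \<forall>g\<in>Ar C. Tgt C f = Src C g \<longrightarrow> cmp C g f \<in> hom C (Src C f) (Tgt C g)"
    and unit: "\<forall>f\<in>Ar C. cmp C f (idt C (Src C f)) = f \<and> cmp C (idt C (Tgt C f)) f = f"
    and assoc: "\<forall>f\<in>Ar C. \<forall>g\<in>Ar C. \<forall>h\<in>Ar C. Tgt C f = Src C g \<longrightarrow> Tgt C g = Src C h \<longrightarrow>
        cmp C h (cmp C g f) = cmp C (cmp C h g) f"
  show "\<forall>f\<in>Ar C. Tgt C f \<in> Ob C \<and> Src C f \<in> Ob C" using ob by blast
  show "\<forall>A\<in>Ob C. idt C A \<in> hom C A A" by (fact idt)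
  show "\<forall>f\<in>Ar C. \<forall>g\<in>Ar C. Src C f = Tgt C g \<longrightarrow> cmp C f g \<in> hom C (Src C g) (Tgt C f)"
    using cmp by simp
  show "\<forall>f\<in>Ar C. cmp C (idt C (Tgt C f)) f = f \<and> cmp C f (idt C (Src C f)) = f" using unit by simp
  show "\<forall>f\<in>Ar C. \<forall>g\<in>Ar C. \<forall>h\<in>Ar C. Src C f = Tgt C g \<longrightarrow> Src C g = Tgt C h \<longrightarrow>
        cmp C (cmp C f g) h = cmp C f (cmp C g h)" using assoc by simp
qed

lemma (in preadditive) preadditive_op_cat: "preadditive (op_cat C)"
proof
  have "\<forall>A\<in>Ob C. \<forall>B\<in>Ob C. \<forall>D\<in>Ob C.
        (\<forall>f\<in>hom C B A. \<forall>f'\<in>hom C B A. \<forall>g\<in>hom C D B.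
           cmp C (pls C f f') g = pls C (cmp C f g) (cmp C f' g)) \<and>
        (\<forall>f\<in>hom C B A. \<forall>g\<in>hom C D B. \<forall>g'\<in>hom C D B.
           cmp C f (pls C g g') = pls C (cmp C f g) (cmp C f g'))"
    using cmp_pls_distrib_left cmp_pls_distrib_right by blast
  then show "is_preadditive (op_cat C)"
    unfolding is_preadditive_def op_cat_simps hom_op_cat
    using is_category_op_cat[OF category]
    by (simp add: zer_hom pls_hom ngt_hom pls_assoc pls_commute pls_zer pls_ngt)
qed

lemma comm_ladder_op_cat:
  assumes L: "comm_ladder C X Y dX dY f k"
  shows "comm_ladder (op_cat C) (\<lambda>i. Y (k - i)) (\<lambda>i. X (k - i)) (\<lambda>i. dY (k - Suc i))
           (\<lambda>i. dX (k - Suc i)) (\<lambda>i. f (k - i)) k"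
  unfolding comm_ladder_def op_cat_simps hom_op_cat
proof (intro conjI allI impI)
  fix i
  show "f (k - i) \<in> hom C (X (k - i)) (Y (k - i))" using comm_ladder_vertical[OF L] by simp
  assume "i < k"
  then have j: "k - Suc i < k" and Suc_j: "Suc (k - Suc i) = k - i" by arith+
  show "dY (k - Suc i) \<in> hom C (Y (k - Suc i)) (Y (k - i))"
    using comm_ladder_bottom[OF L j] Suc_j by simp
  show "dX (k - Suc i) \<in> hom C (X (k - Suc i)) (X (k - i))"
    using comm_ladder_top[OF L j] Suc_j by simp
  show "cmp C (dY (k - Suc i)) (f (k - Suc i)) = cmp C (f (k - i)) (dX (k - Suc i))"
    using comm_ladder_commutes[OF L j] Suc_j by simp
qed

lemma (in preadditive) weak_kernel_five_lemma:
  assumes L: "comm_ladder C X Y dX dY f 4"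
    and epi0: "epi C (f 0)" and iso1: "iso C (f 1)" and iso3: "iso C (f 3)" and mono4: "mono C (f 4)"
    and wker: "\<forall>i\<in>{0,1,2}. weak_kernel C (dX (Suc i)) (dX i) \<and> weak_kernel C (dY (Suc i)) (dY i)"
  shows "iso C (f 2)"
proof -
  interpret op: preadditive "op_cat C" by (rule preadditive_op_cat)
  have "iso (op_cat C) (f (4 - 2))"
    using op.weak_cokernel_five_lemma[OF comm_ladder_op_cat[OF L]] epi0 iso1 iso3 mono4 wker
    by (simp add: eval_nat_numeral)
  then show ?thesis by simp
qed

theorem mainTheorem10:
  fixes C :: "('o, 'm) catdata" and n :: nat
    and X Y :: "nat \<Rightarrow> 'o" and dX dY f :: "nat \<Rightarrow> 'm"
  assumes nab: "n_abelian C n"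
    and obX: "\<forall>i\<le>4. X i \<in> Ob C" and obY: "\<forall>i\<le>4. Y i \<in> Ob C"
    and dXh: "\<forall>i<4. dX i \<in> hom C (X i) (X (Suc i))"
    and dYh: "\<forall>i<4. dY i \<in> hom C (Y i) (Y (Suc i))"
    and fh: "\<forall>i\<le>4. f i \<in> hom C (X i) (Y i)"
    and comm: "\<forall>i<4. cmp C (f (Suc i)) (dX i) = cmp C (dY i) (f i)"
    and iso1: "iso C (f 1)" and iso3: "iso C (f 3)"
    and epi0: "epi C (f 0)" and mono4: "mono C (f 4)"
    and cond: "(\<forall>i\<in>{1,2,3}. weak_cokernel C (dX (i - 1)) (dX i) \<and> weak_cokernel C (dY (i - 1)) (dY i))
             \<or> (\<forall>i\<in>{0,1,2}. weak_kernel C (dX (Suc i)) (dX i) \<and> weak_kernel C (dY (Suc i)) (dY i))"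
  shows "iso C (f 2)"
proof -
  interpret preadditive C
    using nab unfolding n_abelian_def is_additive_def by unfold_locales blast
  have L: "comm_ladder C X Y dX dY f 4"
    using dXh dYh fh comm unfolding comm_ladder_def by blast
  from cond show ?thesis
    using weak_cokernel_five_lemma[OF L epi0 iso1 iso3 mono4]
      weak_kernel_five_lemma[OF L epi0 iso1 iso3 mono4]
    by blast
qed

end
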